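(* Let $\mathcal P$ be a finite set of points in an arbitrary metric space, and let $G=(\mathcal P,E)$ be an undirected network in which every agent is greedy connected and whose number of edges is minimum among all such networks on $\mathcal P$ (a social optimum network). Then there is an assignment of each edge of $E$ to exactly one of its endpoints as owner such that the resulting strategy profile of the undirected greedy routing network creation game is a $2$-approximate Nash equilibrium.
   Context: Undirected variant of the game: $\mathcal P$ is a finite set of points (agents) with metric $d$; each agent $u$ chooses a strategy $S_u\subseteq\{\{u,v\}:v\in\mathcal P\setminus\{u\}\}$ of undirected edges, which it owns; a profile $\mathbf s$ induces the network $G(\mathbf s)$ on $\mathcal P$ in which $\{u,v\}$ is an edge iff $\{u,v\}\in S_u\cup S_v$. A greedy routing path from $u$ to $w$ is a path $(x_1=u,\dots,x_j=w)$ in the network with $d(x_i,w)>d(x_{i+1},w)$ for all $i$; $u$ is greedy connected if it has a greedy routing path to every other agent. The cost of $u$ is $c_u(\mathbf s)=|S_u|$ if $u$ is greedy connected and $\infty$ otherwise. A profile $\mathbf s$ is a $\beta$-approximate Nash equilibrium if no agent $u$ can, by unilaterally changing its strategy, obtain cost strictly less than $\frac1\beta c_u(\mathbf s)$. *)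

theory Defs
  imports Complex_Main "HOL-Library.Extended_Real"
begin

definition metric_on :: "'a set \<Rightarrow> ('a \<Rightarrow> 'a \<Rightarrow> real) \<Rightarrow> bool" where
  "metric_on P d \<longleftrightarrow>
     (\<forall>x\<in>P. \<forall>y\<in>P. d x y \<ge> 0 \<and> (d x y = 0 \<longleftrightarrow> x = y) \<and> d x y = d y x) \<and>
     (\<forall>x\<in>P. \<forall>y\<in>P. \<forall>z\<in>P. d x z \<le> d x y + d y z)"

definition all_edges :: "'a set \<Rightarrow> 'a set set" where
  "all_edges P = {{u, v} | u v. u \<in> P \<and> v \<in> P \<and> u \<noteq> v}"

definition valid_strategy :: "'a set \<Rightarrow> 'a \<Rightarrow> 'a set set \<Rightarrow> bool" where
  "valid_strategy P u S \<longleftrightarrow> S \<subseteq> {{u, v} | v. v \<in> P - {u}}"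

definition network :: "'a set \<Rightarrow> ('a \<Rightarrow> 'a set set) \<Rightarrow> 'a set set" where
  "network P s = (\<Union>u\<in>P. s u)"

definition greedy_path :: "'a set set \<Rightarrow> ('a \<Rightarrow> 'a \<Rightarrow> real) \<Rightarrow> 'a \<Rightarrow> 'a \<Rightarrow> 'a list \<Rightarrow> bool" where
  "greedy_path E d u w xs \<longleftrightarrow> xs \<noteq> [] \<and> hd xs = u \<and> last xs = w \<and>
     (\<forall>i < length xs - 1. {xs ! i, xs ! Suc i} \<in> E \<and> d (xs ! i) w > d (xs ! Suc i) w)"

definition greedy_connected :: "'a set \<Rightarrow> ('a \<Rightarrow> 'a \<Rightarrow> real) \<Rightarrow> 'a set set \<Rightarrow> 'a \<Rightarrow> bool" where
  "greedy_connected P d E u \<longleftrightarrow> (\<forall>w\<in>P - {u}. \<exists>xs. greedy_path E d u w xs)"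

definition social_optimum :: "'a set \<Rightarrow> ('a \<Rightarrow> 'a \<Rightarrow> real) \<Rightarrow> 'a set set \<Rightarrow> bool" where
  "social_optimum P d E \<longleftrightarrow> E \<subseteq> all_edges P \<and> (\<forall>u\<in>P. greedy_connected P d E u) \<and>
     (\<forall>E'. E' \<subseteq> all_edges P \<and> (\<forall>u\<in>P. greedy_connected P d E' u) \<longrightarrow> card E \<le> card E')"

definition cost :: "'a set \<Rightarrow> ('a \<Rightarrow> 'a \<Rightarrow> real) \<Rightarrow> ('a \<Rightarrow> 'a set set) \<Rightarrow> 'a \<Rightarrow> ereal" where
  "cost P d s u = (if greedy_connected P d (network P s) u then ereal (real (card (s u))) else \<infinity>)"

definition approx_NE :: "'a set \<Rightarrow> ('a \<Rightarrow> 'a \<Rightarrow> real) \<Rightarrow> real \<Rightarrow> ('a \<Rightarrow> 'a set set) \<Rightarrow> bool" where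
  "approx_NE P d \<beta> s \<longleftrightarrow>
     (\<forall>u\<in>P. \<forall>S'. valid_strategy P u S' \<longrightarrow>
        \<not> (cost P d (s(u := S')) u < cost P d s u / ereal \<beta>))"

end

(*
  Greedy connectivity of all agents is a local property: it holds as soon as every agent u has,
  for every target w, a neighbour strictly closer to w than u (greedy paths are then built by
  induction on the number of points closer to w), and conversely the first step of a greedy path
  provides such a neighbour.

  In a social optimum E, every nonempty set V of agents contains an agent u that cannot replace
  its edges inside V by fewer than half as many new edges while keeping this local property:
  otherwise all agents of V could do so simultaneously, and since every edge inside V is counted
  at both of its endpoints, the result would be a network with fewer edges than E in which all
  agents are still greedy connected. Removing such agents one at a time, each taking ownership of
  its remaining edges, makes every edge owned exactly once, and no owner can deviate to a strategy
  costing less than half of what it pays.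
*)
theory Submission
  imports Defs "HOL-Library.Disjoint_Sets"
begin

definition neighbors :: "'a set set \<Rightarrow> 'a \<Rightarrow> 'a set" where
  "neighbors F u = {v. {u, v} \<in> F}"

lemma neighbors_Un [simp]: "neighbors (F \<union> F') u = neighbors F u \<union> neighbors F' u"
  by (auto simp: neighbors_def)

lemma card_neighbors_le:
  assumes "finite F"
  shows "card (neighbors F u) \<le> card F"
proof -
  have "inj_on (\<lambda>v. {u, v}) (neighbors F u)"
    by (auto simp: inj_on_def doubleton_eq_iff)
  then show ?thesis
    using card_inj_on_le[OF _ _ assms] by (force simp: neighbors_def)
qed

definition greedy_sufficient :: "'a set \<Rightarrow> ('a \<Rightarrow> 'a \<Rightarrow> real) \<Rightarrow> 'a \<Rightarrow> 'a set \<Rightarrow> bool" where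
  "greedy_sufficient P d u X \<longleftrightarrow> (\<forall>w\<in>P - {u}. \<exists>y\<in>X. d y w < d u w)"

lemma greedy_sufficient_mono:
  "greedy_sufficient P d u X \<Longrightarrow> X \<subseteq> X' \<Longrightarrow> greedy_sufficient P d u X'"
  unfolding greedy_sufficient_def by blast

lemma greedy_path_Cons:
  assumes "greedy_path F d y w ys" "{x, y} \<in> F" "d y w < d x w"
  shows "greedy_path F d x w (x # ys)"
  using assms unfolding greedy_path_def
  by (auto simp: hd_conv_nth nth_Cons less_diff_conv split: nat.split)

lemma greedy_path_first_step:
  assumes "greedy_path F d u w xs" "u \<noteq> w"
  shows "\<exists>y\<in>neighbors F u. d y w < d u w"
proof -
  obtain y ys where xs: "xs = u # y # ys"
    using assms by (cases xs rule: remdups_adj.cases) (auto simp: greedy_path_def)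
  then show ?thesis
    using assms(1) unfolding greedy_path_def neighbors_def by force
qed

lemma greedy_sufficient_neighbors:
  "greedy_connected P d F u \<Longrightarrow> greedy_sufficient P d u (neighbors F u)"
  unfolding greedy_connected_def greedy_sufficient_def
  using greedy_path_first_step by fastforce

lemma greedy_path_if_closer_neighbors:
  assumes "finite P" "x \<in> P"
    and closer: "\<And>x. x \<in> P \<Longrightarrow> x \<noteq> w \<Longrightarrow> \<exists>y\<in>neighbors F x \<inter> P. d y w < d x w"
  shows "\<exists>xs. greedy_path F d x w xs"
  using assms(2)
proof (induction "card {z\<in>P. d z w < d x w}" arbitrary: x rule: less_induct)
  case less
  show ?case
  proof (cases "x = w")
    case True
    then have "greedy_path F d x w [x]"
      by (simp add: greedy_path_def)
    then show ?thesis ..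
  next
    case False
    then obtain y where y: "y \<in> neighbors F x" "y \<in> P" "d y w < d x w"
      using closer less.prems by blast
    have "{z\<in>P. d z w < d y w} \<subset> {z\<in>P. d z w < d x w}"
      using y by auto
    then have "card {z\<in>P. d z w < d y w} < card {z\<in>P. d z w < d x w}"
      by (simp add: psubset_card_mono assms(1))
    then obtain ys where "greedy_path F d y w ys"
      using less.hyps y(2) by blast
    then have "greedy_path F d x w (x # ys)"
      using greedy_path_Cons y by (auto simp: neighbors_def)
    then show ?thesis ..
  qed
qed

lemma greedy_connected_if_sufficient:
  assumes "finite P" "x \<in> P"
    and "\<And>x. x \<in> P \<Longrightarrow> greedy_sufficient P d x (neighbors F x \<inter> P)"
  shows "greedy_connected P d F x"
  unfolding greedy_connected_def
proof
  fix w assume "w \<in> P - {x}"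
  with assms show "\<exists>xs. greedy_path F d x w xs"
    by (intro greedy_path_if_closer_neighbors) (auto simp: greedy_sufficient_def)
qed

lemma all_edges_iff: "{u, v} \<in> all_edges P \<longleftrightarrow> u \<in> P \<and> v \<in> P \<and> u \<noteq> v"
  by (auto simp: all_edges_def doubleton_eq_iff)

lemma card_all_edges_mem: "e \<in> all_edges P \<Longrightarrow> card e = 2"
  by (auto simp: all_edges_def)

lemma finite_all_edges: "finite P \<Longrightarrow> finite (all_edges P)"
  by (rule finite_subset[of _ "Pow P"]) (auto simp: all_edges_def)

lemma neighbors_subset: "F \<subseteq> all_edges P \<Longrightarrow> neighbors F u \<subseteq> P"
  by (auto simp: neighbors_def all_edges_iff dest!: subsetD)

definition incident_within :: "'a set set \<Rightarrow> 'a set \<Rightarrow> 'a \<Rightarrow> 'a set set" where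
  "incident_within E V u = {e\<in>E. u \<in> e \<and> e \<subseteq> V}"

lemma sum_card_incident_within:
  assumes "finite V" "finite E" "\<And>e. e \<in> E \<Longrightarrow> card e = 2"
  shows "(\<Sum>u\<in>V. card (incident_within E V u)) = 2 * card {e\<in>E. e \<subseteq> V}"
proof -
  let ?EV = "{e\<in>E. e \<subseteq> V}"
  have count: "card {x\<in>A. P x} = (\<Sum>x\<in>A. if P x then 1 else 0)" if "finite A" for A P
    using that by (simp add: sum.inter_filter[symmetric])
  have "incident_within E V u = {e\<in>?EV. u \<in> e}" for u
    by (auto simp: incident_within_def)
  then have "(\<Sum>u\<in>V. card (incident_within E V u)) = (\<Sum>u\<in>V. \<Sum>e\<in>?EV. if u \<in> e then 1 else 0)"
    using count[of ?EV] assms(2) by simp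
  also have "\<dots> = (\<Sum>e\<in>?EV. \<Sum>u\<in>V. if u \<in> e then 1 else 0)"
    by (rule sum.swap)
  also have "\<dots> = (\<Sum>e\<in>?EV. card {u\<in>V. u \<in> e})"
    by (intro sum.cong refl count[OF assms(1), symmetric])
  also have "\<dots> = (\<Sum>e\<in>?EV. card e)"
    by (intro sum.cong refl arg_cong[where f = card]) auto
  also have "\<dots> = 2 * card ?EV"
    using assms(3) by simp
  finally show ?thesis .
qed

lemma orientation_by_peeling:
  assumes "finite V"
    and "\<And>W. W \<subseteq> V \<Longrightarrow> W \<noteq> {} \<Longrightarrow> \<exists>u\<in>W. Q u (incident_within E W u)"
  shows "\<exists>s. (\<forall>u\<in>V. s u \<subseteq> incident_within E V u \<and> Q u (s u)) \<and> disjoint_family_on s V \<and>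
             (\<forall>e\<in>E. e \<subseteq> V \<longrightarrow> e \<noteq> {} \<longrightarrow> (\<exists>u\<in>V. e \<in> s u))"
  using assms
proof (induction V rule: finite_psubset_induct)
  case (psubset V)
  show ?case
  proof (cases "V = {}")
    case True
    then show ?thesis
      by (intro exI[of _ "\<lambda>_. {}"]) (auto simp: disjoint_family_on_def)
  next
    case False
    then obtain u where u: "u \<in> V" "Q u (incident_within E V u)"
      using psubset.prems by blast
    have smaller: "V - {u} \<subset> V"
      using u by blast
    have peel: "\<exists>u\<in>W. Q u (incident_within E W u)" if "W \<subseteq> V - {u}" "W \<noteq> {}" for W
      using psubset.prems that by blast
    obtain s where
      s: "\<forall>x\<in>V - {u}. s x \<subseteq> incident_within E (V - {u}) x \<and> Q x (s x)"
        "disjoint_family_on s (V - {u})"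
        "\<forall>e\<in>E. e \<subseteq> V - {u} \<longrightarrow> e \<noteq> {} \<longrightarrow> (\<exists>x\<in>V - {u}. e \<in> s x)"
      using psubset.IH[OF smaller peel] by blast
    let ?s = "s(u := incident_within E V u)"
    have "\<forall>x\<in>V. ?s x \<subseteq> incident_within E V x \<and> Q x (?s x)"
      using s(1) u(2) by (auto simp: incident_within_def)
    moreover have "disjoint_family_on ?s V"
      using s(1,2) by (fastforce simp: disjoint_family_on_def incident_within_def)
    moreover have "\<forall>e\<in>E. e \<subseteq> V \<longrightarrow> e \<noteq> {} \<longrightarrow> (\<exists>x\<in>V. e \<in> ?s x)"
      using s(3) u(1) by (fastforce simp: incident_within_def)
    ultimately show ?thesis
      by blast
  qed
qed

lemma card_replace_inner_edges_less:
  assumes finV: "finite V" and finE: "finite E" and "V \<noteq> {}"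
    and "\<And>e. e \<in> E \<Longrightarrow> card e = 2"
    and finY: "\<And>u. u \<in> V \<Longrightarrow> finite (Y u)"
    and fewer: "\<And>u. u \<in> V \<Longrightarrow> 2 * card (Y u) < card (incident_within E V u)"
  shows "card ({e\<in>E. \<not> e \<subseteq> V} \<union> (\<Union>u\<in>V. (\<lambda>y. {u, y}) ` Y u)) < card E"
proof -
  have "card ({e\<in>E. \<not> e \<subseteq> V} \<union> (\<Union>u\<in>V. (\<lambda>y. {u, y}) ` Y u))
      \<le> card {e\<in>E. \<not> e \<subseteq> V} + card (\<Union>u\<in>V. (\<lambda>y. {u, y}) ` Y u)"
    by (rule card_Un_le)
  also have "card (\<Union>u\<in>V. (\<lambda>y. {u, y}) ` Y u) \<le> (\<Sum>u\<in>V. card ((\<lambda>y. {u, y}) ` Y u))"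
    using finV by (rule card_UN_le)
  also have "\<dots> \<le> (\<Sum>u\<in>V. card (Y u))"
    using finY by (intro sum_mono card_image_le)
  finally have "card ({e\<in>E. \<not> e \<subseteq> V} \<union> (\<Union>u\<in>V. (\<lambda>y. {u, y}) ` Y u))
      \<le> card {e\<in>E. \<not> e \<subseteq> V} + (\<Sum>u\<in>V. card (Y u))"
    by simp
  moreover have "2 * (\<Sum>u\<in>V. card (Y u)) < (\<Sum>u\<in>V. card (incident_within E V u))"
    using sum_strict_mono[OF finV \<open>V \<noteq> {}\<close> fewer] by (simp add: sum_distrib_left)
  moreover have "(\<Sum>u\<in>V. card (incident_within E V u)) = 2 * card {e\<in>E. e \<subseteq> V}"
    using finV finE assms(4) by (rule sum_card_incident_within)
  moreover have "card E = card {e\<in>E. \<not> e \<subseteq> V} + card {e\<in>E. e \<subseteq> V}"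
  proof -
    have "card E = card ({e\<in>E. \<not> e \<subseteq> V} \<union> {e\<in>E. e \<subseteq> V})"
      by (rule arg_cong[where f = card]) blast
    also have "\<dots> = card {e\<in>E. \<not> e \<subseteq> V} + card {e\<in>E. e \<subseteq> V}"
      using finE by (intro card_Un_disjoint) auto
    finally show ?thesis .
  qed
  ultimately show ?thesis
    by linarith
qed

text \<open>The edges in \<open>E - S\<close> at \<open>u\<close> are paid for by other agents and survive any deviation
  of \<open>u\<close>, whose own new edges lead to the points \<open>Y\<close>.\<close>
definition stable_ownership :: "'a set \<Rightarrow> ('a \<Rightarrow> 'a \<Rightarrow> real) \<Rightarrow> 'a set set \<Rightarrow> 'a \<Rightarrow> 'a set set \<Rightarrow> bool" where
  "stable_ownership P d E u S \<longleftrightarrow>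
     (\<forall>Y \<subseteq> P - {u}. greedy_sufficient P d u (neighbors (E - S) u \<union> Y) \<longrightarrow> card S \<le> 2 * card Y)"

lemma exists_stable_owner:
  assumes fin: "finite P" and opt: "social_optimum P d E" and "V \<subseteq> P" "V \<noteq> {}"
  shows "\<exists>u\<in>V. stable_ownership P d E u (incident_within E V u)"
proof (rule ccontr)
  assume "\<not> ?thesis"
  then have "\<forall>u\<in>V. \<exists>Y. Y \<subseteq> P - {u} \<and>
      greedy_sufficient P d u (neighbors (E - incident_within E V u) u \<union> Y) \<and>
      2 * card Y < card (incident_within E V u)"
    by (auto simp: stable_ownership_def not_le)
  then obtain Y where Y: "\<And>u. u \<in> V \<Longrightarrow> Y u \<subseteq> P - {u}"
      "\<And>u. u \<in> V \<Longrightarrow> greedy_sufficient P d u (neighbors (E - incident_within E V u) u \<union> Y u)"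
      "\<And>u. u \<in> V \<Longrightarrow> 2 * card (Y u) < card (incident_within E V u)"
    by metis
  have EP: "E \<subseteq> all_edges P" and gcE: "\<And>u. u \<in> P \<Longrightarrow> greedy_connected P d E u"
    using opt by (auto simp: social_optimum_def)
  have finE: "finite E" and finV: "finite V"
    using finite_all_edges[OF fin] EP fin \<open>V \<subseteq> P\<close> by (auto intro: finite_subset)
  \<comment> \<open>all agents of \<open>V\<close> trade their edges inside \<open>V\<close> for their cheaper alternatives\<close>
  define F where "F = {e\<in>E. \<not> e \<subseteq> V} \<union> (\<Union>u\<in>V. (\<lambda>y. {u, y}) ` Y u)"
  have "u \<in> P \<and> y \<in> P \<and> u \<noteq> y" if "u \<in> V" "y \<in> Y u" for u y
    using Y(1) \<open>V \<subseteq> P\<close> that by blast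
  then have FP: "F \<subseteq> all_edges P"
    using EP by (auto simp: F_def all_edges_iff)
  have "greedy_sufficient P d x (neighbors F x)" if "x \<in> P" for x
  proof (cases "x \<in> V")
    case True
    have "neighbors (E - incident_within E V x) x \<union> Y x \<subseteq> neighbors F x"
      using True by (auto simp: neighbors_def F_def incident_within_def)
    then show ?thesis
      by (rule greedy_sufficient_mono[OF Y(2)[OF True]])
  next
    case False
    have "neighbors E x \<subseteq> neighbors F x"
      using False by (auto simp: neighbors_def F_def)
    then show ?thesis
      by (rule greedy_sufficient_mono[OF greedy_sufficient_neighbors[OF gcE[OF that]]])
  qed
  then have "\<forall>x\<in>P. greedy_connected P d F x"
    using greedy_connected_if_sufficient[OF fin] neighbors_subset[OF FP] by (simp add: Int_absorb2)
  then have "card E \<le> card F"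
    using opt FP by (simp add: social_optimum_def)
  moreover have "card F < card E"
    unfolding F_def using Y(1,3) fin EP
    by (intro card_replace_inner_edges_less finV finE \<open>V \<noteq> {}\<close> card_all_edges_mem)
      (auto intro: finite_subset)
  ultimately show False
    by simp
qed

lemma network_fun_upd:
  assumes "u \<in> P" "disjoint_family_on s P"
  shows "network P (s(u := S)) = (network P s - s u) \<union> S"
  using assms by (auto simp: network_def disjoint_family_on_def)

lemma finite_valid_strategy: "finite P \<Longrightarrow> valid_strategy P u S \<Longrightarrow> finite S"
  unfolding valid_strategy_def by (rule finite_subset) auto

lemma neighbors_valid_strategy: "valid_strategy P u S \<Longrightarrow> neighbors S u \<subseteq> P - {u}"
  by (auto simp: valid_strategy_def neighbors_def doubleton_eq_iff)

lemma valid_strategy_if_incident: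
  "E \<subseteq> all_edges P \<Longrightarrow> S \<subseteq> incident_within E P u \<Longrightarrow> valid_strategy P u S"
  by (fastforce simp: valid_strategy_def incident_within_def all_edges_def)

lemma approx_NE_2_if_stable_ownership:
  assumes fin: "finite P" and disj: "disjoint_family_on s P" and net: "network P s = E"
    and gc: "\<And>u. u \<in> P \<Longrightarrow> greedy_connected P d E u"
    and stable: "\<And>u. u \<in> P \<Longrightarrow> stable_ownership P d E u (s u)"
  shows "approx_NE P d 2 s"
  unfolding approx_NE_def
proof (intro ballI allI impI)
  fix u S assume u: "u \<in> P" and S: "valid_strategy P u S"
  have cost_s: "cost P d s u = ereal (card (s u))"
    using gc[OF u] net by (simp add: cost_def)
  show "\<not> cost P d (s(u := S)) u < cost P d s u / ereal 2"
  proof (cases "greedy_connected P d (network P (s(u := S))) u")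
    case False
    then show ?thesis
      unfolding cost_s by (simp add: cost_def)
  next
    case True
    have "network P (s(u := S)) = (E - s u) \<union> S"
      using network_fun_upd[OF u disj] net by simp
    then have "greedy_sufficient P d u (neighbors (E - s u) u \<union> neighbors S u)"
      using greedy_sufficient_neighbors[OF True] by simp
    then have "card (s u) \<le> 2 * card (neighbors S u)"
      using stable[OF u] neighbors_valid_strategy[OF S] by (simp add: stable_ownership_def)
    also have "\<dots> \<le> 2 * card S"
      using card_neighbors_le[OF finite_valid_strategy[OF fin S]] by simp
    finally show ?thesis
      unfolding cost_s using True by (simp add: cost_def)
  qed
qed

theorem mainTheorem16:
  fixes P :: "'a set" and d :: "'a \<Rightarrow> 'a \<Rightarrow> real" and E :: "'a set set"
  assumes "finite P" and "metric_on P d" and "social_optimum P d E"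
  shows "\<exists>s. (\<forall>u\<in>P. valid_strategy P u (s u)) \<and> network P s = E \<and>
             (\<forall>e\<in>E. \<exists>!u. u \<in> P \<and> e \<in> s u) \<and> approx_NE P d 2 s"
proof -
  have EP: "E \<subseteq> all_edges P" and gc: "\<And>u. u \<in> P \<Longrightarrow> greedy_connected P d E u"
    using assms(3) by (auto simp: social_optimum_def)
  obtain s where own: "\<forall>u\<in>P. s u \<subseteq> incident_within E P u \<and> stable_ownership P d E u (s u)"
    and disj: "disjoint_family_on s P"
    and cover: "\<forall>e\<in>E. e \<subseteq> P \<longrightarrow> e \<noteq> {} \<longrightarrow> (\<exists>u\<in>P. e \<in> s u)"
    using orientation_by_peeling[OF assms(1) exists_stable_owner[OF assms(1,3)]] by blast
  have owner: "\<exists>u\<in>P. e \<in> s u" if "e \<in> E" for e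
    using cover that EP by (auto simp: all_edges_def)
  have "network P s = E"
    using own owner by (auto simp: network_def incident_within_def)
  moreover have "\<exists>!u. u \<in> P \<and> e \<in> s u" if "e \<in> E" for e
    using owner[OF that] disj by (auto simp: disjoint_family_on_def)
  moreover have "valid_strategy P u (s u)" if "u \<in> P" for u
    using valid_strategy_if_incident[OF EP] own that by blast
  ultimately show ?thesis
    using approx_NE_2_if_stable_ownership[OF assms(1) disj _ gc] own
    by (intro exI[of _ s] conjI ballI) auto
qed

end
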